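(* Let $G$ be an ordered graph, let $xy\in E(G)$, and let $(i,x)\in\mathbb N\times V(G)$. If $\mathrm{ht}_G(xy)\succ_{\mathrm{lex}}(i,x)$, then there is an edge $xz\in E(G)$ with $\mathrm{ht}_G(xz)=(i,x)$.
   Context: An ordered graph is a finite simple graph $G$ equipped with a total order $\le_G$ on $E(G)$ and a total order $\le^V_G$ on $V(G)$. Let $\mathbb N=\{1,2,\dots\}$. Define $\preceq_{\mathrm{lex}}$ on $\mathbb N\times V(G)$ by $(i,v)\preceq_{\mathrm{lex}}(i',v')$ iff $i<i'$, or $i=i'$ and $v\le^V_G v'$. The height table $\mathrm{HT}(G)$ is a partially filled array indexed by $\mathbb N\times V(G)$, built by going through all $(i,v)$ in $\preceq_{\mathrm{lex}}$-increasing order and setting the entry at $(i,v)$ to be the $\le_G$-largest edge containing $v$ not yet entered into the table (blank if none remain). Every edge is entered exactly once; $\mathrm{ht}_G(e)$ denotes the position of $e$ in $\mathrm{HT}(G)$, written as (row, column). *)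

theory Defs
  imports Main
begin

definition ordered_graph ::
  "'a set \<Rightarrow> 'a set set \<Rightarrow> ('a \<times> 'a) set \<Rightarrow> ('a set \<times> 'a set) set \<Rightarrow> bool" where
  "ordered_graph V E rV rE \<longleftrightarrow>
     finite V \<and>
     E \<subseteq> {{u, v} | u v. u \<in> V \<and> v \<in> V \<and> u \<noteq> v} \<and>
     linear_order_on V rV \<and> linear_order_on E rE"

definition lex_less :: "('a \<times> 'a) set \<Rightarrow> nat \<times> 'a \<Rightarrow> nat \<times> 'a \<Rightarrow> bool" where
  "lex_less rV p q \<longleftrightarrow> fst p < fst q \<or> (fst p = fst q \<and> (snd p, snd q) \<in> rV \<and> snd p \<noteq> snd q)"

definition max_edge :: "('a set \<times> 'a set) set \<Rightarrow> 'a set set \<Rightarrow> 'a set" where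
  "max_edge rE S = (THE m. m \<in> S \<and> (\<forall>e\<in>S. (e, m) \<in> rE))"

text \<open>T is the height table: cells are indexed by positive naturals times vertices; the
  entry at (i,v) is the largest edge containing v not entered at any lex-smaller cell
  (None = blank).\<close>
definition is_height_table ::
  "'a set \<Rightarrow> 'a set set \<Rightarrow> ('a \<times> 'a) set \<Rightarrow> ('a set \<times> 'a set) set
   \<Rightarrow> (nat \<times> 'a \<Rightarrow> 'a set option) \<Rightarrow> bool" where
  "is_height_table V E rV rE T \<longleftrightarrow>
     (\<forall>i v. \<not> (1 \<le> i \<and> v \<in> V) \<longrightarrow> T (i, v) = None) \<and>
     (\<forall>i v. 1 \<le> i \<longrightarrow> v \<in> V \<longrightarrow>
        (let R = E - {e. \<exists>c. lex_less rV c (i, v) \<and> T c = Some e} in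
         T (i, v) = (if \<exists>e\<in>R. v \<in> e then Some (max_edge rE {e \<in> R. v \<in> e}) else None)))"

definition height_table ::
  "'a set \<Rightarrow> 'a set set \<Rightarrow> ('a \<times> 'a) set \<Rightarrow> ('a set \<times> 'a set) set \<Rightarrow> nat \<times> 'a \<Rightarrow> 'a set option" where
  "height_table V E rV rE = (THE T. is_height_table V E rV rE T)"

definition ht ::
  "'a set \<Rightarrow> 'a set set \<Rightarrow> ('a \<times> 'a) set \<Rightarrow> ('a set \<times> 'a set) set \<Rightarrow> 'a set \<Rightarrow> nat \<times> 'a" where
  "ht V E rV rE e = (THE c. height_table V E rV rE c = Some e)"

end

(*
  The height table is the unique fixpoint of its defining recursion, which is well founded
  because the lexicographic order on cells is. Each edge occupies exactly one cell: a second
  cell would come lex-after the first, where the edge is no longer available, and an edge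
  never entered would stay available in the column of one of its endpoints, filling that
  column in every row with pairwise distinct edges of a finite graph.
  So if xy occupies a cell lex-after (i, x), then xy is still available when (i, x) is
  filled; this cell is therefore non-blank and holds an edge xz, whose height is (i, x).
*)
theory Submission
  imports Defs
begin

lemma ordered_graph_finite_edges:
  assumes "ordered_graph V E rV rE"
  shows "finite E"
proof -
  have "E \<subseteq> Pow V" using assms by (auto simp: ordered_graph_def)
  moreover have "finite V" using assms by (simp add: ordered_graph_def)
  ultimately show ?thesis by (meson finite_Pow_iff rev_finite_subset)
qed

lemma ordered_graph_edgeE:
  assumes "ordered_graph V E rV rE" "e \<in> E"
  obtains u v where "e = {u, v}" "u \<in> V" "v \<in> V" "u \<noteq> v"
  using assms by (auto simp: ordered_graph_def)

lemma ordered_graph_edge_containing: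
  assumes "ordered_graph V E rV rE" "e \<in> E" "x \<in> e"
  obtains z where "e = {x, z}"
  using assms by (elim ordered_graph_edgeE) auto

lemma wf_lex_less:
  assumes "finite V" "partial_order_on V rV"
  shows "wf {(c, d). lex_less rV c d}"
proof (rule wf_subset)
  have "finite rV"
    using assms by (metis finite_SigmaI finite_subset order_on_defs(1,2))
  then show "wf (less_than <*lex*> (rV - Id))"
    using assms(2) partial_order_on_well_order_on by blast
  show "{(c, d). lex_less rV c d} \<subseteq> less_than <*lex*> (rV - Id)"
    by (auto simp: lex_less_def)
qed

lemma lex_less_asym:
  assumes "antisym rV" "lex_less rV c d"
  shows "\<not> lex_less rV d c"
  using assms by (auto simp: lex_less_def antisym_def)

lemma lex_less_total:
  assumes "total_on V rV" "snd c \<in> V" "snd d \<in> V" "c \<noteq> d"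
  shows "lex_less rV c d \<or> lex_less rV d c"
  using assms by (cases c, cases d) (auto simp: lex_less_def total_on_def)

lemma finite_linear_order_has_greatest:
  assumes "linear_order_on A r" "finite S" "S \<noteq> {}" "S \<subseteq> A"
  shows "\<exists>m\<in>S. \<forall>e\<in>S. (e, m) \<in> r"
  using assms(2-4)
proof (induction S rule: finite_ne_induct)
  case (singleton x)
  then show ?case using assms(1) by (simp add: order_on_defs refl_on_def)
next
  case (insert x F)
  then obtain m where m: "m \<in> F" "\<forall>e\<in>F. (e, m) \<in> r" by auto
  have "(x, m) \<in> r \<or> (m, x) \<in> r" "(x, x) \<in> r" "trans r"
    using assms(1) insert m(1) by (auto simp: order_on_defs refl_on_def total_on_def)
  then show ?case using m by (metis insert_iff transD)
qed

lemma max_edge_mem: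
  assumes "linear_order_on A r" "finite S" "S \<noteq> {}" "S \<subseteq> A"
  shows "max_edge r S \<in> S"
proof -
  obtain m where m: "m \<in> S" "\<forall>e\<in>S. (e, m) \<in> r"
    using finite_linear_order_has_greatest[OF assms] by blast
  have "max_edge r S = m"
    unfolding max_edge_def
  proof (rule the_equality)
    show "m \<in> S \<and> (\<forall>e\<in>S. (e, m) \<in> r)" using m by blast
    show "m' = m" if "m' \<in> S \<and> (\<forall>e\<in>S. (e, m') \<in> r)" for m'
      using that m assms(1) by (meson antisymD linear_order_on_def partial_order_on_def)
  qed
  with m show ?thesis by simp
qed

definition entered_before ::
  "('a \<times> 'a) set \<Rightarrow> (nat \<times> 'a \<Rightarrow> 'a set option) \<Rightarrow> nat \<times> 'a \<Rightarrow> 'a set set" where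
  "entered_before rV T d = {e. \<exists>c. lex_less rV c d \<and> T c = Some e}"

definition table_entry ::
  "'a set \<Rightarrow> 'a set set \<Rightarrow> ('a \<times> 'a) set \<Rightarrow> ('a set \<times> 'a set) set
   \<Rightarrow> (nat \<times> 'a \<Rightarrow> 'a set option) \<Rightarrow> nat \<times> 'a \<Rightarrow> 'a set option" where
  "table_entry V E rV rE T d =
     (let R = {e \<in> E - entered_before rV T d. snd d \<in> e} in
      if 1 \<le> fst d \<and> snd d \<in> V \<and> R \<noteq> {} then Some (max_edge rE R) else None)"

lemma is_height_table_iff_fixpoint:
  "is_height_table V E rV rE T \<longleftrightarrow> (\<forall>d. T d = table_entry V E rV rE T d)"
proof -
  have "T (i, v) = table_entry V E rV rE T (i, v) \<longleftrightarrow>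
      (\<not> (1 \<le> i \<and> v \<in> V) \<longrightarrow> T (i, v) = None) \<and>
      (1 \<le> i \<longrightarrow> v \<in> V \<longrightarrow>
        (let R = E - {e. \<exists>c. lex_less rV c (i, v) \<and> T c = Some e} in
         T (i, v) = (if \<exists>e\<in>R. v \<in> e then Some (max_edge rE {e \<in> R. v \<in> e}) else None)))"
    for i v
    by (auto simp: table_entry_def entered_before_def Let_def)
  then show ?thesis
    unfolding is_height_table_def split_paired_All by (simp only: all_conj_distrib)
qed

lemma adm_wf_table_entry: "adm_wf {(c, d). lex_less rV c d} (table_entry V E rV rE)"
  unfolding adm_wf_def
proof (intro allI impI)
  fix T T' :: "nat \<times> 'a \<Rightarrow> 'a set option" and d
  assume "\<forall>c. (c, d) \<in> {(c, d). lex_less rV c d} \<longrightarrow> T c = T' c"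
  then have "entered_before rV T d = entered_before rV T' d"
    unfolding entered_before_def by force
  then show "table_entry V E rV rE T d = table_entry V E rV rE T' d"
    by (simp add: table_entry_def)
qed

lemma height_table_fixpoints_eq:
  assumes "wf {(c, d). lex_less rV c d}"
    and "is_height_table V E rV rE T1" "is_height_table V E rV rE T2"
  shows "T1 = T2"
proof
  fix d
  show "T1 d = T2 d"
    using assms(1)
  proof (induction d rule: wf_induct_rule)
    case (less d)
    then have "table_entry V E rV rE T1 d = table_entry V E rV rE T2 d"
      using adm_wf_table_entry[of rV V E rE] unfolding adm_wf_def by blast
    with assms(2,3) show ?case
      unfolding is_height_table_iff_fixpoint by metis
  qed
qed

lemma is_height_table_height_table:
  assumes "wf {(c, d). lex_less rV c d}"
  shows "is_height_table V E rV rE (height_table V E rV rE)"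
proof -
  let ?T = "wfrec {(c, d). lex_less rV c d} (table_entry V E rV rE)"
  have "?T = table_entry V E rV rE ?T"
    by (rule wfrec_fixpoint[OF assms adm_wf_table_entry])
  then have wfrec_table: "is_height_table V E rV rE ?T"
    unfolding is_height_table_iff_fixpoint by metis
  show ?thesis
    unfolding height_table_def
    by (rule theI[where P = "is_height_table V E rV rE", OF wfrec_table])
      (rule height_table_fixpoints_eq[OF assms _ wfrec_table])
qed

lemma ordered_graph_is_height_table:
  assumes "ordered_graph V E rV rE"
  shows "is_height_table V E rV rE (height_table V E rV rE)"
  using assms by (intro is_height_table_height_table wf_lex_less)
    (auto simp: ordered_graph_def linear_order_on_def)

context
  fixes V E rV rE T
  assumes G: "ordered_graph V E rV rE" and T: "is_height_table V E rV rE T"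
begin

lemma height_table_SomeD:
  assumes "T d = Some e"
  shows "1 \<le> fst d" "snd d \<in> V" "e \<in> E" "snd d \<in> e" "e \<notin> entered_before rV T d"
proof -
  let ?R = "{e \<in> E - entered_before rV T d. snd d \<in> e}"
  have "T d = table_entry V E rV rE T d"
    using T unfolding is_height_table_iff_fixpoint by blast
  with assms have d: "1 \<le> fst d" "snd d \<in> V" "?R \<noteq> {}" "e = max_edge rE ?R"
    by (auto simp: table_entry_def Let_def split: if_splits)
  have "linear_order_on E rE"
    using G by (simp add: ordered_graph_def)
  moreover have "finite ?R"
    using ordered_graph_finite_edges[OF G] by simp
  ultimately have "e \<in> ?R"
    using d(3,4) max_edge_mem by blast
  with d(1,2) show "1 \<le> fst d" "snd d \<in> V" "e \<in> E" "snd d \<in> e" "e \<notin> entered_before rV T d"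
    by auto
qed

lemma height_table_not_blank:
  assumes "1 \<le> fst d" "snd d \<in> V" "e \<in> E" "snd d \<in> e" "e \<notin> entered_before rV T d"
  shows "T d \<noteq> None"
proof -
  have "T d = table_entry V E rV rE T d"
    using T unfolding is_height_table_iff_fixpoint by blast
  with assms show ?thesis
    by (auto simp: table_entry_def Let_def)
qed

lemma height_table_inj:
  assumes "T c = Some e" "T d = Some e"
  shows "c = d"
proof (rule ccontr)
  assume "c \<noteq> d"
  moreover have "total_on V rV"
    using G by (simp add: ordered_graph_def linear_order_on_def)
  ultimately have "lex_less rV c d \<or> lex_less rV d c"
    using lex_less_total height_table_SomeD(2) assms by blast
  then show False
    using height_table_SomeD(5) assms unfolding entered_before_def by blast
qed

lemma height_table_entered:
  assumes "e \<in> E"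
  shows "\<exists>c. T c = Some e"
proof (rule ccontr)
  assume never: "\<nexists>c. T c = Some e"
  obtain u v where u: "e = {u, v}" "u \<in> V"
    using G assms by (elim ordered_graph_edgeE)
  define f where "f n = the (T (Suc n, u))" for n
  have "T (Suc n, u) \<noteq> None" for n
    using height_table_not_blank[of "(Suc n, u)" e] never assms u
    unfolding entered_before_def by auto
  then have f: "T (Suc n, u) = Some (f n)" for n
    by (simp add: f_def)
  have "inj f"
    using height_table_inj f by (metis injI prod.inject nat.inject)
  moreover have "range f \<subseteq> E"
    using height_table_SomeD(3) f by blast
  ultimately show False
    using ordered_graph_finite_edges[OF G] by (meson finite_imageD finite_subset infinite_UNIV_nat)
qed

end

lemma ht_eqI:
  assumes "ordered_graph V E rV rE" "height_table V E rV rE c = Some e"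
  shows "ht V E rV rE e = c"
  unfolding ht_def
  using assms(2) height_table_inj[OF assms(1) ordered_graph_is_height_table[OF assms(1)] _ assms(2)]
  by (rule the_equality)

theorem mainTheorem12:
  fixes V :: "'a set" and E :: "'a set set"
    and rV :: "('a \<times> 'a) set" and rE :: "('a set \<times> 'a set) set"
    and x y :: 'a and i :: nat
  assumes G: "ordered_graph V E rV rE"
    and xy: "{x, y} \<in> E"
    and i: "1 \<le> i" and x: "x \<in> V"
    and gt: "lex_less rV (i, x) (ht V E rV rE {x, y})"
  shows "\<exists>z. {x, z} \<in> E \<and> ht V E rV rE {x, z} = (i, x)"
proof -
  define T where "T = height_table V E rV rE"
  have T: "is_height_table V E rV rE T"
    unfolding T_def using G by (rule ordered_graph_is_height_table)
  obtain c where c: "T c = Some {x, y}"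
    using height_table_entered[OF G T xy] by blast
  have "antisym rV"
    using G by (simp add: ordered_graph_def order_on_defs)
  then have "\<not> lex_less rV c (i, x)"
    using lex_less_asym gt unfolding ht_eqI[OF G c[unfolded T_def]] by blast
  then have "{x, y} \<notin> entered_before rV T (i, x)"
    using height_table_inj[OF G T _ c] unfolding entered_before_def by blast
  then obtain m where m: "T (i, x) = Some m"
    using height_table_not_blank[OF G T, of "(i, x)"] i x xy by fastforce
  then have "m \<in> E" "x \<in> m"
    using height_table_SomeD[OF G T m] by simp_all
  then obtain z where "m = {x, z}"
    using G ordered_graph_edge_containing by metis
  moreover have "ht V E rV rE m = (i, x)"
    using ht_eqI[OF G m[unfolded T_def]] .
  ultimately show ?thesis
    using \<open>m \<in> E\<close> by blast
qed

end
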